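(* Let $G$ be a graph containing no cycle of length 6, let $x\in V(G)$, and let $A$ be a bipartite connected component of $G[N_2(x)]$ with vertex sets of bipartition $V_1$ and $V_2$ such that $\min(|V_1|,|V_2|)\ge 2$. Then $|N(x)\cap N(V(A))|=1$.
   Context: All graphs are finite, simple and undirected; "containing no cycle of length 6" means having no subgraph (not necessarily induced) isomorphic to $C_6$. $N_i(S)$ denotes the set of vertices at distance exactly $i$ from the vertex set $S$, $N(S)=N_1(S)$, $N(v)=N(\{v\})$, $N_2(v)=N_2(\{v\})$. *)

theory Defs
  imports Main
begin

definition simple_graph :: "'a set \<Rightarrow> ('a \<Rightarrow> 'a \<Rightarrow> bool) \<Rightarrow> bool" where
  "simple_graph V E \<longleftrightarrow> finite V \<and> (\<forall>u v. E u v \<longrightarrow> u \<in> V \<and> v \<in> V)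
     \<and> (\<forall>u v. E u v \<longrightarrow> E v u) \<and> (\<forall>v. \<not> E v v)"

definition has_C6 :: "'a set \<Rightarrow> ('a \<Rightarrow> 'a \<Rightarrow> bool) \<Rightarrow> bool" where
  "has_C6 V E \<longleftrightarrow> (\<exists>c :: nat \<Rightarrow> 'a. (\<forall>i<6. c i \<in> V) \<and> inj_on c {0..<6}
      \<and> (\<forall>i<6. E (c i) (c ((i + 1) mod 6))))"

definition nbhd :: "'a set \<Rightarrow> ('a \<Rightarrow> 'a \<Rightarrow> bool) \<Rightarrow> 'a set \<Rightarrow> 'a set" where
  "nbhd V E S = {v \<in> V. v \<notin> S \<and> (\<exists>u\<in>S. E u v)}"

definition nbhd2 :: "'a set \<Rightarrow> ('a \<Rightarrow> 'a \<Rightarrow> bool) \<Rightarrow> 'a \<Rightarrow> 'a set" where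
  "nbhd2 V E x = {v \<in> V. v \<noteq> x \<and> \<not> E x v \<and> (\<exists>u. E x u \<and> E u v)}"

definition induced_adj :: "('a \<Rightarrow> 'a \<Rightarrow> bool) \<Rightarrow> 'a set \<Rightarrow> 'a \<Rightarrow> 'a \<Rightarrow> bool" where
  "induced_adj E S u v \<longleftrightarrow> u \<in> S \<and> v \<in> S \<and> E u v"

definition is_component :: "('a \<Rightarrow> 'a \<Rightarrow> bool) \<Rightarrow> 'a set \<Rightarrow> 'a set \<Rightarrow> bool" where
  "is_component E S C \<longleftrightarrow> (\<exists>v\<in>S. C = {w. (induced_adj E S)\<^sup>*\<^sup>* v w})"

definition is_bipartition :: "('a \<Rightarrow> 'a \<Rightarrow> bool) \<Rightarrow> 'a set \<Rightarrow> 'a set \<Rightarrow> 'a set \<Rightarrow> bool" where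
  "is_bipartition E C V1 V2 \<longleftrightarrow> V1 \<union> V2 = C \<and> V1 \<inter> V2 = {}
     \<and> (\<forall>u\<in>V1. \<forall>v\<in>V1. \<not> E u v) \<and> (\<forall>u\<in>V2. \<forall>v\<in>V2. \<not> E u v)"

end

theory Submission imports Defs begin

text \<open>Call the common neighbours of x and a vertex w \<in> N_2(x) the parents of w.
If w-m-u is a path in G[N_2(x)] with w \<noteq> u, then a parent y of u and a parent y' \<noteq> y
of w would close the 6-cycle x y' w m u y, so w and u have the same single parent.
Both sides of A having two vertices, A contains a path a-b-c-d, and the 6-cycle
y a b y' d c forces a and b to share their parent as well. Propagating along the edges
of A, all of A has one parent, which is then the only vertex of N(x) adjacent to A.\<close>

lemma has_C6I:
  assumes "distinct [a0, a1, a2, a3, a4, a5]" "set [a0, a1, a2, a3, a4, a5] \<subseteq> V"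
    and "E a0 a1" "E a1 a2" "E a2 a3" "E a3 a4" "E a4 a5" "E a5 a0"
  shows "has_C6 V E"
proof -
  define c where "c = (\<lambda>i. [a0, a1, a2, a3, a4, a5] ! i)"
  have cases6: "i = 0 \<or> i = 1 \<or> i = 2 \<or> i = 3 \<or> i = 4 \<or> i = 5" if "i < 6" for i :: nat
    using that by auto
  have "\<forall>i<6. c i \<in> V"
    using assms(2) unfolding c_def by (auto dest: cases6)
  moreover have "inj_on c {0..<6}"
    unfolding c_def by (rule inj_on_nth[OF assms(1)]) simp
  moreover have "\<forall>i<6. E (c i) (c ((i + 1) mod 6))"
    using assms(3-) unfolding c_def by (auto dest: cases6)
  ultimately show ?thesis
    unfolding has_C6_def by blast
qed

definition contains_P4 :: "('a \<Rightarrow> 'a \<Rightarrow> bool) \<Rightarrow> 'a set \<Rightarrow> bool" where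
  "contains_P4 R C \<longleftrightarrow>
     (\<exists>a b c d. a \<in> C \<and> R a b \<and> R b c \<and> R c d \<and> distinct [a, b, c, d])"

lemma is_component_subset: "is_component E S C \<Longrightarrow> C \<subseteq> S"
  unfolding is_component_def induced_adj_def
  by (auto elim: rtranclp.cases)

lemma rtranclp_symp_connected:
  assumes "symp R" "R\<^sup>*\<^sup>* v u" "R\<^sup>*\<^sup>* v w"
  shows "R\<^sup>*\<^sup>* u w"
  using assms sympD[OF symp_rtranclp[OF \<open>symp R\<close>]] by (metis rtranclp_trans)

lemma rtranclp_closed_set:
  assumes "R\<^sup>*\<^sup>* u w" "u \<in> B" "\<And>z t. z \<in> B \<Longrightarrow> R z t \<Longrightarrow> t \<in> B"
  shows "w \<in> B"
  using assms by (induction rule: rtranclp_induct) auto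

lemma bipartition_no_triangle:
  assumes "is_bipartition R C V1 V2" "a \<in> C" "b \<in> C" "c \<in> C" "R a b" "R b c" "R a c"
  shows False
  using assms unfolding is_bipartition_def by blast

lemma component_of_pendant_is_star:
  assumes "symp R" "irreflp R" and C: "C = {w. R\<^sup>*\<^sup>* v0 w}" and "\<not> contains_P4 R C"
    and "p \<in> C" "R p q" and pendant: "\<And>z. R p z \<Longrightarrow> z = q"
  shows "C \<subseteq> insert q {z. R q z}"
proof
  have sym: "R a b \<Longrightarrow> R b a" for a b
    using \<open>symp R\<close> by (blast dest: sympD)
  have closed: "u \<in> C \<Longrightarrow> R u z \<Longrightarrow> z \<in> C" for u z
    using C by (auto intro: rtranclp.rtrancl_into_rtrancl)
  have "q \<in> C"
    using closed \<open>p \<in> C\<close> \<open>R p q\<close> by blast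
  fix w assume "w \<in> C"
  then have "R\<^sup>*\<^sup>* q w"
    using C \<open>q \<in> C\<close> rtranclp_symp_connected[OF \<open>symp R\<close>] by blast
  then show "w \<in> insert q {z. R q z}"
  proof (rule rtranclp_closed_set)
    show "q \<in> insert q {z. R q z}"
      by simp
  next
    fix z t assume z: "z \<in> insert q {z. R q z}" and "R z t"
    show "t \<in> insert q {z. R q z}"
    proof (rule ccontr)
      assume t: "t \<notin> insert q {z. R q z}"
      then have "z \<noteq> q" "R q z"
        using z \<open>R z t\<close> by auto
      moreover have "z \<noteq> p" "t \<noteq> p"
        using pendant t \<open>R z t\<close> \<open>R q z\<close> \<open>z \<noteq> q\<close> sym by auto
      moreover have "t \<in> C"
        using closed \<open>q \<in> C\<close> \<open>R q z\<close> \<open>R z t\<close> by blast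
      ultimately have "contains_P4 R C"
        using t \<open>R z t\<close> \<open>R p q\<close> \<open>irreflp R\<close> sym
        unfolding contains_P4_def irreflp_def by (metis distinct_length_2_or_more distinct_singleton insertCI)
      then show False
        using assms(4) by contradiction
    qed
  qed
qed

lemma star_bipartition_side_le1:
  assumes "C \<subseteq> insert q {z. R q z}" "q \<in> C" "is_bipartition R C V1 V2"
  shows "card V1 \<le> 1 \<or> card V2 \<le> 1"
proof -
  have "V1 \<subseteq> {q} \<or> V2 \<subseteq> {q}"
    using assms unfolding is_bipartition_def by blast
  then show ?thesis
    using card_mono[of "{q}" V1] card_mono[of "{q}" V2] by auto
qed

lemma connected_bipartite_contains_P4:
  assumes "symp R" "irreflp R" and C: "C = {w. R\<^sup>*\<^sup>* v0 w}"
    and bip: "is_bipartition R C V1 V2" and "card V1 \<ge> 2" "card V2 \<ge> 2"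
  shows "contains_P4 R C"
proof (rule ccontr)
  assume no_P4: "\<not> contains_P4 R C"
  have sym: "R a b \<Longrightarrow> R b a" for a b
    using \<open>symp R\<close> by (blast dest: sympD)
  have irr: "R a b \<Longrightarrow> a \<noteq> b" for a b
    using \<open>irreflp R\<close> by (auto dest: irreflpD)
  have closed: "u \<in> C \<Longrightarrow> R u z \<Longrightarrow> z \<in> C" for u z
    using C by (auto intro: rtranclp.rtrancl_into_rtrancl)
  have second_neighbour: "\<exists>r. R p r \<and> r \<noteq> q" if "p \<in> C" "R p q" for p q
  proof (rule ccontr)
    assume "\<not> ?thesis"
    then have "C \<subseteq> insert q {z. R q z}"
      using component_of_pendant_is_star[OF assms(1-3) no_P4 that] by blast
    moreover have "q \<in> C"
      using closed that by blast
    ultimately have "card V1 \<le> 1 \<or> card V2 \<le> 1"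
      by (rule star_bipartition_side_le1[OF _ _ bip])
    then show False
      using assms(5,6) by linarith
  qed
  have "v0 \<in> C"
    using C by simp
  have "\<not> V1 \<subseteq> {v0}"
    using card_mono[of "{v0}" V1] assms(5) by auto
  then obtain w where "w \<in> C" "w \<noteq> v0"
    using bip unfolding is_bipartition_def by blast
  then obtain q where "R v0 q"
    using C by (auto elim: converse_rtranclpE)
  then have "q \<in> C" "R q v0"
    using closed \<open>v0 \<in> C\<close> sym by auto
  obtain r where "R v0 r" "r \<noteq> q"
    using second_neighbour \<open>v0 \<in> C\<close> \<open>R v0 q\<close> by blast
  obtain s where "R q s" "s \<noteq> v0"
    using second_neighbour \<open>q \<in> C\<close> \<open>R q v0\<close> by blast
  have "r \<in> C" "s \<in> C"
    using closed \<open>v0 \<in> C\<close> \<open>q \<in> C\<close> \<open>R v0 r\<close> \<open>R q s\<close> by blast+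
  have "r \<noteq> s"
    using bipartition_no_triangle[OF bip \<open>v0 \<in> C\<close> \<open>q \<in> C\<close> \<open>r \<in> C\<close>] \<open>R v0 q\<close> \<open>R q s\<close> \<open>R v0 r\<close>
    by blast
  moreover have "R r v0"
    using \<open>R v0 r\<close> sym by blast
  moreover have "r \<noteq> v0" "v0 \<noteq> q" "q \<noteq> s"
    using irr \<open>R v0 r\<close> \<open>R v0 q\<close> \<open>R q s\<close> by blast+
  ultimately have "contains_P4 R C"
    using \<open>r \<in> C\<close> \<open>R v0 q\<close> \<open>R q s\<close> \<open>r \<noteq> q\<close> \<open>s \<noteq> v0\<close>
    unfolding contains_P4_def by auto
  then show False
    using no_P4 by contradiction
qed

locale C6_free_rooted_graph =
  fixes V :: "'a set" and E :: "'a \<Rightarrow> 'a \<Rightarrow> bool" and x :: 'a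
  assumes simple: "simple_graph V E" and no_C6: "\<not> has_C6 V E" and root: "x \<in> V"
begin

abbreviation N2 :: "'a set" where
  "N2 \<equiv> nbhd2 V E x"

abbreviation R :: "'a \<Rightarrow> 'a \<Rightarrow> bool" where
  "R \<equiv> induced_adj E N2"

definition parents :: "'a \<Rightarrow> 'a set" where
  "parents w = {y. E x y \<and> E y w}"

lemma sym: "E u v \<Longrightarrow> E v u"
  and irrefl: "\<not> E v v"
  and edge_in_V: "E u v \<Longrightarrow> u \<in> V \<and> v \<in> V"
  using simple unfolding simple_graph_def by blast+

lemma symp_R: "symp R"
  unfolding induced_adj_def by (auto intro: sympI sym)

lemma irreflp_R: "irreflp R"
  unfolding induced_adj_def by (auto intro: irreflpI simp: irrefl)

lemma parents_nonempty: "w \<in> N2 \<Longrightarrow> parents w \<noteq> {}"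
  unfolding nbhd2_def parents_def by blast

lemma parents_in_N1: "y \<in> parents w \<Longrightarrow> y \<in> nbhd V E {x}"
  unfolding parents_def nbhd_def using edge_in_V irrefl by blast

lemma N1_disjoint_N2: "E x y \<Longrightarrow> y \<notin> N2"
  unfolding nbhd2_def by blast

lemma parents_eq_along_path2:
  assumes "R w m" "R m u" "w \<noteq> u" "y \<in> parents u" "y' \<in> parents w"
  shows "y = y'"
proof (rule ccontr)
  assume "y \<noteq> y'"
  have "w \<in> N2" "m \<in> N2" "u \<in> N2" "E w m" "E m u"
    using assms(1,2) unfolding induced_adj_def by auto
  moreover have "E x y" "E y u" "E x y'" "E y' w"
    using assms(4,5) unfolding parents_def by auto
  ultimately have "has_C6 V E"
    using \<open>y \<noteq> y'\<close> \<open>w \<noteq> u\<close> N1_disjoint_N2 edge_in_V sym irrefl root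
    by (intro has_C6I[of x y' w m u y]) (auto simp: nbhd2_def)
  then show False
    using no_C6 by contradiction
qed

lemma parents_singleton_along_path2:
  assumes "R w m" "R m u" "w \<noteq> u"
  shows "\<exists>y. parents w = {y} \<and> parents u = {y}"
proof -
  have "w \<in> N2" "u \<in> N2"
    using assms unfolding induced_adj_def by auto
  then show ?thesis
    using parents_nonempty parents_eq_along_path2[OF assms] by blast
qed

lemma parents_along_P4:
  assumes "R a b" "R b c" "R c d" "distinct [a, b, c, d]"
  shows "\<exists>y. parents a = {y} \<and> parents b = {y}"
proof -
  obtain y where y: "parents a = {y}" "parents c = {y}"
    using parents_singleton_along_path2 assms by (metis distinct_length_2_or_more)
  obtain y' where y': "parents b = {y'}" "parents d = {y'}"
    using parents_singleton_along_path2 assms by (metis distinct_length_2_or_more)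
  have "y = y'"
  proof (rule ccontr)
    assume "y \<noteq> y'"
    have "a \<in> N2" "b \<in> N2" "c \<in> N2" "d \<in> N2" "E a b" "E b c" "E c d"
      using assms(1-3) unfolding induced_adj_def by auto
    moreover have "E x y" "E y a" "E y c" "E x y'" "E y' b" "E y' d"
      using y y' unfolding parents_def by auto
    ultimately have "has_C6 V E"
      using \<open>y \<noteq> y'\<close> assms(4) N1_disjoint_N2 edge_in_V sym
      by (intro has_C6I[of y a b y' d c]) (auto simp: nbhd2_def)
    then show False
      using no_C6 by contradiction
  qed
  then show ?thesis
    using y y' by blast
qed

lemma N1_inter_nbhd_eq_single_parent:
  assumes "A \<subseteq> N2" "a \<in> A" "\<And>w. w \<in> A \<Longrightarrow> parents w = {y}"
  shows "nbhd V E {x} \<inter> nbhd V E A = {y}"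
proof
  show "nbhd V E {x} \<inter> nbhd V E A \<subseteq> {y}"
    using assms(3) sym unfolding nbhd_def parents_def by blast
next
  have "y \<in> parents a"
    using assms(2,3) by blast
  moreover from this have "y \<notin> A"
    using assms(1) N1_disjoint_N2 unfolding parents_def by blast
  moreover have "E a y"
    using \<open>y \<in> parents a\<close> sym unfolding parents_def by blast
  ultimately have "y \<in> nbhd V E A"
    using assms(2) edge_in_V unfolding nbhd_def by blast
  then show "{y} \<subseteq> nbhd V E {x} \<inter> nbhd V E A"
    using parents_in_N1[OF \<open>y \<in> parents a\<close>] by blast
qed

lemma parents_constant_on_component:
  assumes "R a b" "parents a = {y}" "parents b = {y}" "R\<^sup>*\<^sup>* a w"
  shows "parents w = {y}"
proof -
  \<comment> \<open>carrying a neighbour u with the same parent lets the step w'-w-u use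
    parents_singleton_along_path2\<close>
  have "parents w = {y} \<and> (\<exists>u. R w u \<and> parents u = {y})"
    using assms(4)
  proof (induction rule: rtranclp_induct)
    case base
    then show ?case
      using assms(1-3) by blast
  next
    case (step w w')
    then obtain u where "parents w = {y}" "R w u" "parents u = {y}"
      by blast
    moreover have "R w' w"
      using step.hyps(2) symp_R by (blast dest: sympD)
    ultimately show ?case
      using parents_singleton_along_path2[of w' w u] by fastforce
  qed
  then show ?thesis
    by blast
qed

end

theorem lemma2p5:
  fixes V :: "'a set" and E :: "'a \<Rightarrow> 'a \<Rightarrow> bool" and x :: 'a
    and A V1 V2 :: "'a set"
  assumes "simple_graph V E"
    and "\<not> has_C6 V E"
    and "x \<in> V"
    and "is_component E (nbhd2 V E x) A"
    and "is_bipartition E A V1 V2"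
    and "min (card V1) (card V2) \<ge> 2"
  shows "card (nbhd V E {x} \<inter> nbhd V E A) = 1"
proof -
  interpret C6_free_rooted_graph V E x
    using assms(1-3) by unfold_locales
  obtain v0 where A: "A = {w. R\<^sup>*\<^sup>* v0 w}"
    using assms(4) unfolding is_component_def by blast
  have "is_bipartition R A V1 V2"
    using assms(5) unfolding is_bipartition_def induced_adj_def by blast
  then have "contains_P4 R A"
    using connected_bipartite_contains_P4[OF symp_R irreflp_R A] assms(6) by simp
  then obtain a b c d where "a \<in> A" "R a b" "R b c" "R c d" "distinct [a, b, c, d]"
    unfolding contains_P4_def by blast
  moreover obtain y where "parents a = {y}" "parents b = {y}"
    using parents_along_P4 calculation(2-) by blast
  ultimately have "parents w = {y}" if "w \<in> A" for w
    using that A rtranclp_symp_connected[OF symp_R] parents_constant_on_component by blast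
  then have "nbhd V E {x} \<inter> nbhd V E A = {y}"
    using N1_inter_nbhd_eq_single_parent is_component_subset[OF assms(4)] \<open>a \<in> A\<close> by blast
  then show ?thesis
    by simp
qed

end
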